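(* Let $\beta>2\alpha>0$ and let $\varphi_N:\mathbb{R}^{s_N}\to\mathbb{R}$ be $\varphi_N(x)=\frac12x^TAx-\sum_{k=1}^{s_N}\log\cosh(x^TAe_k)$. The Hessian matrix of $\varphi_N$ at $x=(0,\dots,0)$ is positive definite if $\beta+2\alpha<1$, positive semi-definite if $\beta+2\alpha=1$, and not positive (semi-)definite if $\beta+2\alpha>1$.
   Context: $A$ is the $s_N\times s_N$ symmetric circulant matrix $A=\beta I+\alpha(P+P^T)$, where $P$ is the cyclic shift matrix (so $A_{kk}=\beta$, $A_{k,k\pm1}=\alpha$ with indices mod $s_N$); $e_k$ are the standard basis vectors of $\mathbb{R}^{s_N}$. *)

theory Defs
  imports "HOL-Analysis.Analysis"
begin

text \<open>Vectors of R^n are represented as functions nat => real, only indices < n matter;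
  n x n matrices as nat => nat => real, only indices < n matter.\<close>

text \<open>A = beta I + alpha (P + P^T), P the cyclic shift (P i j = 1 iff j = i+1 mod n).\<close>
definition circA :: "nat \<Rightarrow> real \<Rightarrow> real \<Rightarrow> nat \<Rightarrow> nat \<Rightarrow> real" where
  "circA n \<alpha> \<beta> i j =
     (if i = j then \<beta> else 0)
   + (if j = Suc i mod n then \<alpha> else 0)
   + (if i = Suc j mod n then \<alpha> else 0)"

definition quad_form :: "nat \<Rightarrow> (nat \<Rightarrow> nat \<Rightarrow> real) \<Rightarrow> (nat \<Rightarrow> real) \<Rightarrow> real" where
  "quad_form n M x = (\<Sum>i<n. \<Sum>j<n. x i * M i j * x j)"

definition phiN :: "nat \<Rightarrow> real \<Rightarrow> real \<Rightarrow> (nat \<Rightarrow> real) \<Rightarrow> real" where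
  "phiN n \<alpha> \<beta> x = 1/2 * quad_form n (circA n \<alpha> \<beta>) x
      - (\<Sum>k<n. ln (cosh (\<Sum>i<n. x i * circA n \<alpha> \<beta> i k)))"

definition partial :: "((nat \<Rightarrow> real) \<Rightarrow> real) \<Rightarrow> nat \<Rightarrow> (nat \<Rightarrow> real) \<Rightarrow> real" where
  "partial f i x = deriv (\<lambda>t. f (x(i := x i + t))) 0"

definition hessian :: "((nat \<Rightarrow> real) \<Rightarrow> real) \<Rightarrow> (nat \<Rightarrow> real) \<Rightarrow> nat \<Rightarrow> nat \<Rightarrow> real" where
  "hessian f x i j = partial (\<lambda>y. partial f j y) i x"

definition pos_def :: "nat \<Rightarrow> (nat \<Rightarrow> nat \<Rightarrow> real) \<Rightarrow> bool" where
  "pos_def n M \<longleftrightarrow> (\<forall>v. (\<exists>i<n. v i \<noteq> 0) \<longrightarrow> quad_form n M v > 0)"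

definition pos_semidef :: "nat \<Rightarrow> (nat \<Rightarrow> nat \<Rightarrow> real) \<Rightarrow> bool" where
  "pos_semidef n M \<longleftrightarrow> (\<forall>v. quad_form n M v \<ge> 0)"

end

theory Submission
  imports Defs
begin

text \<open>Since \<open>log cosh\<close> has second derivative 1 at the origin, the Hessian of \<open>\<phi>\<^sub>N\<close> at 0
  is \<open>A - A\<^sup>2\<close>. In terms of the cyclic autocorrelations \<open>R\<^sub>d = \<Sum>\<^sub>k v\<^sub>k v\<^sub>k\<^sub>+\<^sub>d\<close> of a vector \<open>v\<close>,
  its quadratic form is \<open>(\<beta> - \<beta>\<^sup>2 - 2\<alpha>\<^sup>2) R\<^sub>0 + 2\<alpha>(1 - 2\<beta>) R\<^sub>1 - 2\<alpha>\<^sup>2 R\<^sub>2\<close>. As \<open>|R\<^sub>d| \<le> R\<^sub>0\<close>,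
  this is at least \<open>(\<beta> - 2\<alpha>)(1 - \<beta> - 2\<alpha>) R\<^sub>0\<close> when \<open>\<beta> + 2\<alpha> \<le> 1\<close>, whereas for the constant
  vector it equals \<open>s\<^sub>N (\<beta> + 2\<alpha>)(1 - \<beta> - 2\<alpha>)\<close>, which is negative when \<open>\<beta> + 2\<alpha> > 1\<close>.\<close>

definition phi_mat :: "nat \<Rightarrow> (nat \<Rightarrow> nat \<Rightarrow> real) \<Rightarrow> (nat \<Rightarrow> real) \<Rightarrow> real" where
  "phi_mat n M x = 1/2 * quad_form n M x - (\<Sum>k<n. ln (cosh (\<Sum>i<n. x i * M i k)))"

lemma sum_mult_fun_upd_add:
  fixes x c :: "nat \<Rightarrow> real"
  assumes "j < n"
  shows "(\<Sum>i<n. (x(j := x j + t)) i * c i) = (\<Sum>i<n. x i * c i) + t * c j"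
proof -
  have "(\<Sum>i<n. (x(j := x j + t)) i * c i) = (\<Sum>i<n. x i * c i + (if i = j then t * c j else 0))"
    by (rule sum.cong) (auto simp: algebra_simps)
  then show ?thesis
    using assms by (simp add: sum.distrib)
qed

lemma quad_form_fun_upd_add:
  assumes "j < n"
  shows "quad_form n M (x(j := x j + t)) =
     quad_form n M x + t * (\<Sum>i<n. x i * (M i j + M j i)) + t\<^sup>2 * M j j"
proof -
  let ?x' = "x(j := x j + t)"
  have "quad_form n M ?x' = (\<Sum>i<n. ?x' i * (\<Sum>l<n. ?x' l * M i l))"
    unfolding quad_form_def by (simp add: sum_distrib_left algebra_simps)
  also have "\<dots> = (\<Sum>i<n. ?x' i * ((\<Sum>l<n. x l * M i l) + t * M i j))"
    by (simp only: sum_mult_fun_upd_add[OF assms])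
  also have "\<dots> = (\<Sum>i<n. x i * ((\<Sum>l<n. x l * M i l) + t * M i j))
                    + t * ((\<Sum>l<n. x l * M j l) + t * M j j)"
    by (rule sum_mult_fun_upd_add[OF assms])
  also have "\<dots> = quad_form n M x + t * (\<Sum>i<n. x i * (M i j + M j i)) + t\<^sup>2 * M j j"
    unfolding quad_form_def
    by (simp add: algebra_simps sum.distrib sum_distrib_left power2_eq_square)
  finally show ?thesis .
qed

lemma partial_phi_mat:
  assumes "j < n"
  shows "partial (phi_mat n M) j x =
     (\<Sum>i<n. x i * (M i j + M j i)) / 2 - (\<Sum>k<n. tanh (\<Sum>i<n. x i * M i k) * M j k)"
proof -
  have "((\<lambda>t. 1/2 * (quad_form n M x + t * (\<Sum>i<n. x i * (M i j + M j i)) + t\<^sup>2 * M j j)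
          - (\<Sum>k<n. ln (cosh ((\<Sum>i<n. x i * M i k) + t * M j k))))
        has_real_derivative
        (\<Sum>i<n. x i * (M i j + M j i)) / 2 - (\<Sum>k<n. tanh (\<Sum>i<n. x i * M i k) * M j k)) (at 0)"
    by (auto intro!: derivative_eq_intros simp: cosh_real_pos tanh_def)
  moreover have "phi_mat n M (x(j := x j + t)) =
      1/2 * (quad_form n M x + t * (\<Sum>i<n. x i * (M i j + M j i)) + t\<^sup>2 * M j j)
      - (\<Sum>k<n. ln (cosh ((\<Sum>i<n. x i * M i k) + t * M j k)))" for t
  proof -
    have "(\<Sum>i<n. (x(j := x j + t)) i * M i k) = (\<Sum>i<n. x i * M i k) + t * M j k" for k
      by (rule sum_mult_fun_upd_add[OF assms])
    then show ?thesis
      by (simp only: phi_mat_def quad_form_fun_upd_add[OF assms])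
  qed
  ultimately show ?thesis
    unfolding partial_def by (simp add: DERIV_imp_deriv)
qed

lemma hessian_phi_mat_zero:
  assumes "i < n" "j < n"
  shows "hessian (phi_mat n M) (\<lambda>_. 0) i j = (M i j + M j i) / 2 - (\<Sum>k<n. M i k * M j k)"
proof -
  have "((\<lambda>s. s * (M i j + M j i) / 2 - (\<Sum>k<n. tanh (s * M i k) * M j k)) has_real_derivative
        (M i j + M j i) / 2 - (\<Sum>k<n. M i k * M j k)) (at 0)"
    by (auto intro!: derivative_eq_intros simp: cosh_real_pos tanh_def)
  then show ?thesis
    using sum_mult_fun_upd_add[OF assms(1), of "\<lambda>_. 0"]
    unfolding hessian_def partial_def[of "partial _ j"] partial_phi_mat[OF assms(2)]
    by (simp add: DERIV_imp_deriv)
qed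

lemma quad_form_symmetrize:
  "quad_form n (\<lambda>i j. (M i j + M j i) / 2) v = quad_form n M v"
proof -
  have "(\<Sum>i<n. \<Sum>j<n. v i * M j i * v j) = quad_form n M v"
    unfolding quad_form_def by (subst sum.swap) (simp add: algebra_simps)
  moreover have "quad_form n (\<lambda>i j. (M i j + M j i) / 2) v
      = (quad_form n M v + (\<Sum>i<n. \<Sum>j<n. v i * M j i * v j)) / 2"
    unfolding quad_form_def
    by (simp add: add_divide_distrib sum.distrib sum_divide_distrib algebra_simps)
  ultimately show ?thesis
    by simp
qed

lemma sum_power2_sum_mult_eq_quad_form:
  "(\<Sum>k<n. (\<Sum>i<n. v i * M i k)\<^sup>2) = quad_form n (\<lambda>i j. \<Sum>k<n. M i k * M j k) v"
proof -
  have "(\<Sum>k<n. (\<Sum>i<n. v i * M i k)\<^sup>2) = (\<Sum>k<n. \<Sum>i<n. \<Sum>j<n. v i * M i k * (v j * M j k))"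
    by (simp add: power2_eq_square sum_product)
  also have "\<dots> = (\<Sum>i<n. \<Sum>j<n. \<Sum>k<n. v i * M i k * (v j * M j k))"
    by (subst sum.swap) (rule sum.cong[OF refl], rule sum.swap)
  also have "\<dots> = quad_form n (\<lambda>i j. \<Sum>k<n. M i k * M j k) v"
    unfolding quad_form_def by (simp add: sum_distrib_left sum_distrib_right algebra_simps)
  finally show ?thesis .
qed

lemma quad_form_hessian_phi_mat_zero:
  "quad_form n (hessian (phi_mat n M) (\<lambda>_. 0)) v =
     quad_form n M v - (\<Sum>k<n. (\<Sum>i<n. v i * M i k)\<^sup>2)"
proof -
  have "quad_form n (hessian (phi_mat n M) (\<lambda>_. 0)) v
      = quad_form n (\<lambda>i j. (M i j + M j i) / 2 - (\<Sum>k<n. M i k * M j k)) v"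
    unfolding quad_form_def by (intro sum.cong refl) (simp add: hessian_phi_mat_zero)
  also have "\<dots> = quad_form n (\<lambda>i j. (M i j + M j i) / 2) v - quad_form n (\<lambda>i j. \<Sum>k<n. M i k * M j k) v"
    unfolding quad_form_def by (simp add: algebra_simps sum_subtractf)
  finally show ?thesis
    by (simp only: quad_form_symmetrize sum_power2_sum_mult_eq_quad_form)
qed

lemma sum_Suc_mod_reindex:
  fixes f :: "nat \<Rightarrow> 'a::comm_monoid_add"
  shows "(\<Sum>k<n. f (Suc k mod n)) = (\<Sum>k<n. f k)"
proof (cases n)
  case (Suc m)
  have "(\<Sum>k<m. f (Suc k mod n)) = (\<Sum>k<m. f (Suc k))"
    using Suc by (intro sum.cong) auto
  then have "(\<Sum>k<n. f (Suc k mod n)) = (\<Sum>k<m. f (Suc k)) + f 0"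
    using Suc by simp
  also have "\<dots> = (\<Sum>k<n. f k)"
    unfolding Suc sum.lessThan_Suc_shift by (rule add.commute)
  finally show ?thesis .
qed simp

lemma sum_add_mod_reindex:
  fixes f :: "nat \<Rightarrow> 'a::comm_monoid_add" and d :: nat
  shows "(\<Sum>k<n. f ((k + d) mod n)) = (\<Sum>k<n. f k)"
proof (induction d arbitrary: f)
  case (Suc d)
  have "(\<Sum>k<n. f ((k + Suc d) mod n)) = (\<Sum>k<n. f (Suc ((k + d) mod n) mod n))"
    by (simp add: mod_Suc_eq)
  also have "\<dots> = (\<Sum>k<n. f (Suc k mod n))"
    by (rule Suc.IH)
  finally show ?case
    by (simp add: sum_Suc_mod_reindex)
qed (intro sum.cong, auto)

lemma add_mod_add_diff_mod:
  fixes k n d :: nat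
  assumes "k < n" "d \<le> n"
  shows "((k + d) mod n + (n - d)) mod n = k"
proof -
  have "((k + d) mod n + (n - d)) mod n = (k + d + (n - d)) mod n"
    by (rule mod_add_left_eq)
  also have "k + d + (n - d) = k + n"
    using assms(2) by simp
  finally show ?thesis
    using assms(1) by simp
qed

definition cyclic_autocorr :: "nat \<Rightarrow> (nat \<Rightarrow> real) \<Rightarrow> nat \<Rightarrow> real" where
  "cyclic_autocorr n v d = (\<Sum>k<n. v k * v ((k + d) mod n))"

lemma cyclic_autocorr_0: "cyclic_autocorr n v 0 = (\<Sum>k<n. (v k)\<^sup>2)"
  unfolding cyclic_autocorr_def by (intro sum.cong) (auto simp: power2_eq_square)

lemma cyclic_autocorr_reflect:
  assumes "d \<le> n"
  shows "cyclic_autocorr n v (n - d) = cyclic_autocorr n v d"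
proof -
  have "cyclic_autocorr n v (n - d)
      = (\<Sum>k<n. v ((k + d) mod n) * v (((k + d) mod n + (n - d)) mod n))"
    unfolding cyclic_autocorr_def by (rule sum_add_mod_reindex[symmetric])
  also have "\<dots> = (\<Sum>k<n. v ((k + d) mod n) * v k)"
  proof (rule sum.cong)
    fix k
    assume "k \<in> {..<n}"
    then show "v ((k + d) mod n) * v (((k + d) mod n + (n - d)) mod n) = v ((k + d) mod n) * v k"
      using add_mod_add_diff_mod[of k n d] assms by simp
  qed simp
  finally show ?thesis
    unfolding cyclic_autocorr_def by (simp add: mult.commute)
qed

lemma abs_cyclic_autocorr_le: "\<bar>cyclic_autocorr n v d\<bar> \<le> cyclic_autocorr n v 0"
proof -
  have amgm: "\<bar>a * b\<bar> \<le> (a\<^sup>2 + b\<^sup>2) / 2" for a b :: real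
    using sum_squares_bound[of "\<bar>a\<bar>" "\<bar>b\<bar>"] by (simp add: abs_mult)
  have "\<bar>cyclic_autocorr n v d\<bar> \<le> (\<Sum>k<n. ((v k)\<^sup>2 + (v ((k + d) mod n))\<^sup>2) / 2)"
    unfolding cyclic_autocorr_def by (rule order_trans[OF sum_abs sum_mono]) (rule amgm)
  also have "\<dots> = ((\<Sum>k<n. (v k)\<^sup>2) + (\<Sum>k<n. (v ((k + d) mod n))\<^sup>2)) / 2"
    by (simp only: sum_divide_distrib[symmetric] sum.distrib)
  also have "\<dots> = cyclic_autocorr n v 0"
    by (simp add: cyclic_autocorr_0 sum_add_mod_reindex[of "\<lambda>k. (v k)\<^sup>2"])
  finally show ?thesis .
qed

lemma Suc_mod_eq_iff:
  assumes "i < n" "k < n"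
  shows "Suc i mod n = k \<longleftrightarrow> i = (k + (n - 1)) mod n"
proof
  assume "Suc i mod n = k"
  then show "i = (k + (n - 1)) mod n"
    using add_mod_add_diff_mod[of i n 1] assms by simp
next
  assume "i = (k + (n - 1)) mod n"
  then show "Suc i mod n = k"
    using assms by (auto simp: mod_Suc_eq)
qed

lemma circA_column:
  assumes "i < n" "k < n"
  shows "circA n \<alpha> \<beta> i k = (if i = k then \<beta> else 0)
      + (if i = (k + (n - 1)) mod n then \<alpha> else 0) + (if i = (k + 1) mod n then \<alpha> else 0)"
  unfolding circA_def using Suc_mod_eq_iff[OF assms] by (auto simp: eq_commute[of k])

lemma sum_mult_circA:
  assumes "k < n"
  shows "(\<Sum>i<n. v i * circA n \<alpha> \<beta> i k)
           = \<beta> * v k + \<alpha> * v ((k + (n - 1)) mod n) + \<alpha> * v ((k + 1) mod n)"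
proof -
  have "(\<Sum>i<n. v i * circA n \<alpha> \<beta> i k)
      = (\<Sum>i<n. (if i = k then \<beta> * v i else 0)
               + (if i = (k + (n - 1)) mod n then \<alpha> * v i else 0)
               + (if i = (k + 1) mod n then \<alpha> * v i else 0))"
    using assms by (intro sum.cong) (simp_all add: circA_column algebra_simps)
  then show ?thesis
    using assms by (simp add: sum.distrib)
qed

lemma quad_form_circA:
  "quad_form n (circA n \<alpha> \<beta>) v = \<beta> * cyclic_autocorr n v 0 + 2 * \<alpha> * cyclic_autocorr n v 1"
proof (cases "n = 0")
  case False
  let ?p = "\<lambda>k. v ((k + (n - 1)) mod n)" and ?s = "\<lambda>k. v ((k + 1) mod n)"
  have "quad_form n (circA n \<alpha> \<beta>) v = (\<Sum>k<n. (\<Sum>i<n. v i * circA n \<alpha> \<beta> i k) * v k)"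
    unfolding quad_form_def by (subst sum.swap) (simp add: sum_distrib_right)
  also have "\<dots> = (\<Sum>k<n. \<beta> * (v k)\<^sup>2 + \<alpha> * (v k * ?p k) + \<alpha> * (v k * ?s k))"
    by (intro sum.cong) (simp_all add: sum_mult_circA algebra_simps power2_eq_square)
  also have "\<dots> = \<beta> * cyclic_autocorr n v 0 + \<alpha> * cyclic_autocorr n v (n - 1)
                   + \<alpha> * cyclic_autocorr n v 1"
    unfolding cyclic_autocorr_0 by (simp add: cyclic_autocorr_def sum.distrib sum_distrib_left)
  finally show ?thesis
    using False by (simp add: cyclic_autocorr_reflect)
qed (simp add: quad_form_def cyclic_autocorr_def)

lemma sum_power2_sum_mult_circA:
  "(\<Sum>k<n. (\<Sum>i<n. v i * circA n \<alpha> \<beta> i k)\<^sup>2)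
     = (\<beta>\<^sup>2 + 2 * \<alpha>\<^sup>2) * cyclic_autocorr n v 0 + 4 * \<alpha> * \<beta> * cyclic_autocorr n v 1
       + 2 * \<alpha>\<^sup>2 * cyclic_autocorr n v 2"
proof (cases "n = 0")
  case False
  let ?p = "\<lambda>k. v ((k + (n - 1)) mod n)" and ?s = "\<lambda>k. v ((k + 1) mod n)"
  have pp: "(\<Sum>k<n. (?p k)\<^sup>2) = cyclic_autocorr n v 0"
    and ss: "(\<Sum>k<n. (?s k)\<^sup>2) = cyclic_autocorr n v 0"
    unfolding cyclic_autocorr_0 by (rule sum_add_mod_reindex)+
  have vp: "(\<Sum>k<n. v k * ?p k) = cyclic_autocorr n v 1"
    using False cyclic_autocorr_reflect[of 1 n v] by (simp add: cyclic_autocorr_def)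
  have vs: "(\<Sum>k<n. v k * ?s k) = cyclic_autocorr n v 1"
    by (simp add: cyclic_autocorr_def)
  have "(\<Sum>k<n. ?p k * ?s k) = (\<Sum>k<n. ?p ((k + 1) mod n) * ?s ((k + 1) mod n))"
    by (rule sum_add_mod_reindex[symmetric])
  also have "\<dots> = cyclic_autocorr n v 2"
    unfolding cyclic_autocorr_def
  proof (rule sum.cong)
    fix k
    assume "k \<in> {..<n}"
    then show "?p ((k + 1) mod n) * ?s ((k + 1) mod n) = v k * v ((k + 2) mod n)"
      using add_mod_add_diff_mod[of k n 1] by (simp add: mod_Suc_eq)
  qed simp
  finally have ps: "(\<Sum>k<n. ?p k * ?s k) = cyclic_autocorr n v 2" .
  have "(\<Sum>k<n. (\<Sum>i<n. v i * circA n \<alpha> \<beta> i k)\<^sup>2) = (\<Sum>k<n. (\<beta> * v k + \<alpha> * ?p k + \<alpha> * ?s k)\<^sup>2)"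
    by (intro sum.cong) (simp_all add: sum_mult_circA)
  also have "\<dots> = \<beta>\<^sup>2 * (\<Sum>k<n. (v k)\<^sup>2) + \<alpha>\<^sup>2 * (\<Sum>k<n. (?p k)\<^sup>2) + \<alpha>\<^sup>2 * (\<Sum>k<n. (?s k)\<^sup>2)
      + 2 * \<alpha> * \<beta> * (\<Sum>k<n. v k * ?p k) + 2 * \<alpha> * \<beta> * (\<Sum>k<n. v k * ?s k)
      + 2 * \<alpha>\<^sup>2 * (\<Sum>k<n. ?p k * ?s k)"
    by (simp add: power2_eq_square algebra_simps sum.distrib sum_distrib_left)
  finally show ?thesis
    unfolding pp ss vp vs ps cyclic_autocorr_0 by (simp add: algebra_simps)
qed (simp add: cyclic_autocorr_def)

lemma phiN_eq_phi_mat: "phiN n \<alpha> \<beta> = phi_mat n (circA n \<alpha> \<beta>)"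
  by (simp add: fun_eq_iff phiN_def phi_mat_def)

lemma quad_form_hessian_phiN_zero:
  "quad_form n (hessian (phiN n \<alpha> \<beta>) (\<lambda>_. 0)) v
     = (\<beta> - \<beta>\<^sup>2 - 2 * \<alpha>\<^sup>2) * cyclic_autocorr n v 0 + 2 * \<alpha> * (1 - 2 * \<beta>) * cyclic_autocorr n v 1
       - 2 * \<alpha>\<^sup>2 * cyclic_autocorr n v 2"
  unfolding phiN_eq_phi_mat quad_form_hessian_phi_mat_zero quad_form_circA sum_power2_sum_mult_circA
  by (simp add: algebra_simps)

lemma hessian_form_lower_bound:
  fixes \<alpha> \<beta> r\<^sub>0 r\<^sub>1 r\<^sub>2 :: real
  assumes "0 < \<alpha>" "2 * \<alpha> \<le> \<beta>" "\<beta> + 2 * \<alpha> \<le> 1" "\<bar>r\<^sub>1\<bar> \<le> r\<^sub>0" "\<bar>r\<^sub>2\<bar> \<le> r\<^sub>0"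
  shows "(\<beta> - 2 * \<alpha>) * (1 - \<beta> - 2 * \<alpha>) * r\<^sub>0
           \<le> (\<beta> - \<beta>\<^sup>2 - 2 * \<alpha>\<^sup>2) * r\<^sub>0 + 2 * \<alpha> * (1 - 2 * \<beta>) * r\<^sub>1 - 2 * \<alpha>\<^sup>2 * r\<^sub>2"
proof -
  have "\<bar>(1 - 2 * \<beta>) * r\<^sub>1\<bar> \<le> (1 - 4 * \<alpha>) * r\<^sub>0"
    unfolding abs_mult using assms by (intro mult_mono) auto
  then have r\<^sub>1: "0 \<le> (1 - 4 * \<alpha>) * r\<^sub>0 + (1 - 2 * \<beta>) * r\<^sub>1"
    by linarith
  have r\<^sub>2: "0 \<le> r\<^sub>0 - r\<^sub>2"
    using assms(5) by linarith
  have "(\<beta> - \<beta>\<^sup>2 - 2 * \<alpha>\<^sup>2) * r\<^sub>0 + 2 * \<alpha> * (1 - 2 * \<beta>) * r\<^sub>1 - 2 * \<alpha>\<^sup>2 * r\<^sub>2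
      - (\<beta> - 2 * \<alpha>) * (1 - \<beta> - 2 * \<alpha>) * r\<^sub>0
      = 2 * \<alpha>\<^sup>2 * (r\<^sub>0 - r\<^sub>2) + 2 * \<alpha> * ((1 - 4 * \<alpha>) * r\<^sub>0 + (1 - 2 * \<beta>) * r\<^sub>1)"
    by (simp add: algebra_simps power2_eq_square)
  also have "\<dots> \<ge> 0"
    using assms(1) r\<^sub>1 r\<^sub>2 by simp
  finally show ?thesis
    by simp
qed

lemma pos_def_imp_pos_semidef:
  assumes "pos_def n M"
  shows "pos_semidef n M"
  unfolding pos_semidef_def
proof
  fix v
  show "0 \<le> quad_form n M v"
  proof (cases "\<exists>i<n. v i \<noteq> 0")
    case True
    then show ?thesis
      using assms unfolding pos_def_def by (blast intro: less_imp_le)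
  next
    case False
    then have "quad_form n M v = 0"
      unfolding quad_form_def by (auto intro!: sum.neutral)
    then show ?thesis
      by simp
  qed
qed

lemma pos_def_if_quad_form_ge:
  assumes "0 < c" and "\<And>v. c * (\<Sum>k<n. (v k)\<^sup>2) \<le> quad_form n M v"
  shows "pos_def n M"
  unfolding pos_def_def
proof (intro allI impI)
  fix v :: "nat \<Rightarrow> real"
  assume "\<exists>i<n. v i \<noteq> 0"
  then have "0 < c * (\<Sum>k<n. (v k)\<^sup>2)"
    using assms(1) by (auto intro!: mult_pos_pos sum_pos2)
  then show "0 < quad_form n M v"
    using assms(2) by (rule order.strict_trans2)
qed

theorem lemma4p2:
  fixes n :: nat and \<alpha> \<beta> :: real
  assumes "n \<ge> 1" and "0 < 2 * \<alpha>" and "2 * \<alpha> < \<beta>"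
  shows "(\<beta> + 2 * \<alpha> < 1 \<longrightarrow> pos_def n (hessian (phiN n \<alpha> \<beta>) (\<lambda>_. 0)))
       \<and> (\<beta> + 2 * \<alpha> = 1 \<longrightarrow> pos_semidef n (hessian (phiN n \<alpha> \<beta>) (\<lambda>_. 0)))
       \<and> (\<beta> + 2 * \<alpha> > 1 \<longrightarrow> \<not> pos_def n (hessian (phiN n \<alpha> \<beta>) (\<lambda>_. 0))
                              \<and> \<not> pos_semidef n (hessian (phiN n \<alpha> \<beta>) (\<lambda>_. 0)))"
proof -
  let ?Q = "quad_form n (hessian (phiN n \<alpha> \<beta>) (\<lambda>_. 0))"
  have lower: "(\<beta> - 2 * \<alpha>) * (1 - \<beta> - 2 * \<alpha>) * (\<Sum>k<n. (v k)\<^sup>2) \<le> ?Q v"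
    if "\<beta> + 2 * \<alpha> \<le> 1" for v
    unfolding quad_form_hessian_phiN_zero cyclic_autocorr_0[symmetric]
    by (rule hessian_form_lower_bound) (use assms that abs_cyclic_autocorr_le in auto)
  have ones: "?Q (\<lambda>_. 1) = n * ((\<beta> + 2 * \<alpha>) * (1 - \<beta> - 2 * \<alpha>))"
    unfolding quad_form_hessian_phiN_zero cyclic_autocorr_def
    by (simp add: algebra_simps power2_eq_square)
  show ?thesis
  proof (intro conjI impI)
    assume "\<beta> + 2 * \<alpha> < 1"
    then have "0 < (\<beta> - 2 * \<alpha>) * (1 - \<beta> - 2 * \<alpha>)"
      using assms by simp
    moreover have "\<And>v. (\<beta> - 2 * \<alpha>) * (1 - \<beta> - 2 * \<alpha>) * (\<Sum>k<n. (v k)\<^sup>2) \<le> ?Q v"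
      using \<open>\<beta> + 2 * \<alpha> < 1\<close> by (intro lower) simp
    ultimately show "pos_def n (hessian (phiN n \<alpha> \<beta>) (\<lambda>_. 0))"
      by (rule pos_def_if_quad_form_ge)
  next
    assume "\<beta> + 2 * \<alpha> = 1"
    then have "1 - \<beta> - 2 * \<alpha> = 0" and "\<beta> + 2 * \<alpha> \<le> 1"
      by simp_all
    then show "pos_semidef n (hessian (phiN n \<alpha> \<beta>) (\<lambda>_. 0))"
      unfolding pos_semidef_def using lower by (metis mult_zero_left mult_zero_right)
  next
    assume "\<beta> + 2 * \<alpha> > 1"
    then have "?Q (\<lambda>_. 1) < 0"
      unfolding ones using assms by (simp add: mult_pos_neg)
    then show "\<not> pos_semidef n (hessian (phiN n \<alpha> \<beta>) (\<lambda>_. 0))"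
      unfolding pos_semidef_def not_all not_le by blast
    then show "\<not> pos_def n (hessian (phiN n \<alpha> \<beta>) (\<lambda>_. 0))"
      using pos_def_imp_pos_semidef by blast
  qed
qed

end
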